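(* For integers $r,k\ge0$ and real $\alpha$ with $\alpha>k>r$, $$\sum_{n=1}^\infty\frac{H_{n+\alpha}^2}{(n+r)(n+k)}=\frac1{k-r}\Bigg\{H_{\alpha-r}^3+H_{\alpha-r}H_{\alpha-r}^{(2)}+H_{\alpha-r}\zeta(2)-H_{\alpha-k}^3-H_{\alpha-k}H_{\alpha-k}^{(2)}-H_{\alpha-k}\zeta(2)$$ $$+(r-\alpha)\sum_{j=1}^r\frac{H_{\alpha+j-r}^2}{j(\alpha+j-r)}+\sum_{j=1}^{k-r}\frac{H_{\alpha+j-k}}{(\alpha+j-k)^2}-(k-\alpha)\sum_{j=1}^k\frac{H_{\alpha+j-k}^2}{j(\alpha+j-k)}\Bigg\}.$$
   Context: Shifted harmonic numbers: for a real $\alpha$ that is not a negative integer, $H_\alpha := \sum_{k=1}^\infty\left(\frac1k-\frac1{k+\alpha}\right)$ and, for integers $m\ge 2$, $H_\alpha^{(m)} := \sum_{k=1}^\infty\left(\frac1{k^m}-\frac1{(k+\alpha)^m}\right)=\zeta(m)-\zeta(m,\alpha+1)$, where $\zeta$ is the Riemann zeta function and $\zeta(s,\alpha+1)=\sum_{n=1}^\infty (n+\alpha)^{-s}$ is the Hurwitz zeta function. Powers such as $H_\alpha^2$ mean $(H_\alpha)^2$. Empty sums are $0$. *)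

theory Defs
  imports "HOL-Analysis.Analysis"
begin

definition shifted_harm :: "real \<Rightarrow> real" where
  "shifted_harm \<alpha> = (\<Sum>k. 1 / real (Suc k) - 1 / (real (Suc k) + \<alpha>))"

definition shifted_harm_gen :: "nat \<Rightarrow> real \<Rightarrow> real" where
  "shifted_harm_gen m \<alpha> = (\<Sum>k. 1 / real (Suc k) ^ m - 1 / (real (Suc k) + \<alpha>) ^ m)"

definition zeta_nat :: "nat \<Rightarrow> real" where
  "zeta_nat m = (\<Sum>n. 1 / real (Suc n) ^ m)"

end

theory Submission
  imports Defs "HOL-Real_Asymp.Real_Asymp"
begin

text \<open>
  Write H for the shifted harmonic number and P(x) for the series of H(n+x)^2 (1/n - 1/(n+x)) over
  n \<ge> 1. Because 1/((n+r)(n+k)) = (w_r(n) - w_k(n))/(k-r) with w_m(n) = 1/(n+m) - 1/(n+\<alpha>), and a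
  shift of the summation index by m turns the series of H(n+\<alpha>)^2 w_m(n) into P(\<alpha>-m) minus m
  initial terms, it suffices to compare P(\<alpha>-r) with P(\<alpha>-k). Inserting H(x+1) = H(x) + 1/(x+1)
  into the summands splits P(x+1) - P(x) into a telescoping series, an elementary one, and the series
  A(y) of H(n+y)(1/n - 1/(n+y)). This gives P(x+1) - P(x) = D(x+1) - D(x) + H(x+1)/(x+1)^2 with
  D = H^3 + H H^(2) + H \<zeta>(2), which is iterated k-r times.

  The evaluation A(y) = H(y)^2 + H^(2)(y) holds because both sides are increasing, vanish at 0 and
  have the same increments 2 H(y+1)/(y+1): their difference is 1-periodic, zero at the integers,
  and squeezed between consecutive integers by increments that tend to 0.
\<close>

lemma shifted_harm_eq_Digamma: "shifted_harm x = Digamma (x + 1) + euler_mascheroni"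
  by (simp add: shifted_harm_def Digamma_def inverse_eq_divide add_ac)

lemma sums_shifted_harm:
  assumes "x \<noteq> -1"
  shows "(\<lambda>k. 1 / real (Suc k) - 1 / (real (Suc k) + x)) sums shifted_harm x"
proof -
  have "x + 1 \<noteq> 0" using assms by linarith
  from summable_sums[OF summable_Digamma[OF this]] show ?thesis
    by (simp add: shifted_harm_def Digamma_def inverse_eq_divide add_ac)
qed

lemma shifted_harm_plus1:
  assumes "x \<noteq> -1"
  shows "shifted_harm (x + 1) = shifted_harm x + 1 / (x + 1)"
proof -
  have "x + 1 \<noteq> 0" using assms by linarith
  from Digamma_plus1[OF this] show ?thesis by (simp add: shifted_harm_eq_Digamma add_ac)
qed

lemma shifted_harm_of_nat: "shifted_harm (real n) = harm n"
  using Digamma_of_nat[where 'a=real, of n] by (simp add: shifted_harm_eq_Digamma add_ac)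

lemma shifted_harm_mono:
  assumes "-1 < x" "x \<le> y"
  shows "shifted_harm x \<le> shifted_harm y"
  using Digamma_real_mono[of "x + 1" "y + 1"] assms by (simp add: shifted_harm_eq_Digamma)

lemma shifted_harm_nonneg: "0 \<le> x \<Longrightarrow> 0 \<le> shifted_harm x"
  using shifted_harm_mono[of 0 x] shifted_harm_of_nat[of 0] by (simp add: harm_def)

lemma sums_inverse_square_shift:
  assumes "x \<noteq> -1"
  shows "(\<lambda>k. 1 / (real (Suc k) + x)^2) sums Polygamma 1 (x + 1)"
proof -
  have "x + 1 \<noteq> 0" using assms by linarith
  from Polygamma_LIMSEQ[OF this, of 1] show ?thesis
    by (simp add: inverse_eq_divide power2_eq_square add_ac)
qed

lemma zeta_nat_2_eq: "zeta_nat 2 = Polygamma 1 1"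
  using sums_inverse_square_shift[of 0] by (simp add: zeta_nat_def sums_iff)

lemma shifted_harm_gen_2_eq:
  assumes "x \<noteq> -1"
  shows "shifted_harm_gen 2 x = zeta_nat 2 - Polygamma 1 (x + 1)"
proof -
  have "(\<lambda>k. 1 / real (Suc k) ^ 2 - 1 / (real (Suc k) + x)^2) sums (Polygamma 1 1 - Polygamma 1 (x + 1))"
    using sums_diff[OF sums_inverse_square_shift[of 0] sums_inverse_square_shift[OF assms]] by simp
  thus ?thesis by (simp add: shifted_harm_gen_def zeta_nat_2_eq sums_iff)
qed

lemma shifted_harm_gen_2_plus1:
  assumes "-1 < x"
  shows "shifted_harm_gen 2 (x + 1) = shifted_harm_gen 2 x + 1 / (x + 1)^2"
proof -
  have "x + 1 \<noteq> 0" using assms by linarith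
  from Polygamma_plus1[OF this, of 1] assms show ?thesis
    by (simp add: shifted_harm_gen_2_eq[of x] shifted_harm_gen_2_eq[of "x + 1"] power2_eq_square)
qed

lemma shifted_harm_gen_2_mono:
  assumes "-1 < x" "x \<le> y"
  shows "shifted_harm_gen 2 x \<le> shifted_harm_gen 2 y"
  using Polygamma_real_strict_antimono[of "x + 1" "y + 1" 1] assms
  by (cases "x = y") (auto simp: shifted_harm_gen_2_eq)

lemma shifted_harm_le_ln:
  assumes "0 \<le> x"
  shows "shifted_harm x \<le> 1 + ln (x + 2)"
proof -
  define N where "N = nat \<lceil>x\<rceil> + 1"
  have N: "x \<le> real N" "real N \<le> x + 2" "0 < N"
    unfolding N_def using assms by linarith+
  have "shifted_harm x \<le> harm N"
    using shifted_harm_mono[of x "real N"] assms N by (simp add: shifted_harm_of_nat)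
  also have "\<dots> \<le> ln (real N) + 1"
    using euler_mascheroni_sequence_decreasing[of 1 N] N by (simp add: harm_def)
  also have "ln (real N) \<le> ln (x + 2)" using N by simp
  finally show ?thesis by simp
qed

lemma shifted_harm_bigo_ln:
  "(\<lambda>k. shifted_harm (real k + y)) \<in> O(\<lambda>k. ln (real k))"
proof -
  have "eventually (\<lambda>k. norm (shifted_harm (real k + y)) \<le> norm (1 + ln (real k + y + 2))) at_top"
    using eventually_ge_at_top[of "nat \<lceil>-y\<rceil>"]
  proof eventually_elim
    case (elim k)
    hence "0 \<le> real k + y" by linarith
    thus ?case using shifted_harm_le_ln[of "real k + y"] shifted_harm_nonneg[of "real k + y"]
      by (simp add: add_ac)
  qed
  hence "(\<lambda>k. shifted_harm (real k + y)) \<in> O(\<lambda>k. 1 + ln (real k + y + 2))"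
    by (rule landau_o.big_mono)
  also have "(\<lambda>k. 1 + ln (real k + y + 2)) \<in> O(\<lambda>k. ln (real k))"
    by real_asymp
  finally show ?thesis .
qed

lemma ln_power_bigo_sqrt: "(\<lambda>k. ln (real k) ^ p) \<in> O(\<lambda>k. sqrt (real k))"
proof (cases "p = 0")
  case True
  then show ?thesis by simp real_asymp
next
  case False
  define a where "a = 1 / (2 * real p)"
  have a: "0 < a" using False by (simp add: a_def)
  have "eventually (\<lambda>k. norm (ln (real k) ^ p) \<le> (1 / a) ^ p * norm (sqrt (real k))) at_top"
    using eventually_ge_at_top[of "1::nat"]
  proof eventually_elim
    case (elim k)
    hence k: "1 \<le> real k" by simp
    have "ln (real k) ^ p \<le> (real k powr a / a) ^ p"
      using ln_powr_bound[OF k a] k by (intro power_mono) auto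
    also have "\<dots> = (1 / a) ^ p * (real k powr a) powr real p"
      using k by (simp add: power_divide powr_realpow)
    also have "\<dots> = (1 / a) ^ p * real k powr (a * real p)"
      by (simp add: powr_powr)
    also have "a * real p = 1 / 2" using False by (simp add: a_def)
    finally show ?case using k by (simp add: powr_half_sqrt)
  qed
  thus ?thesis by (rule bigoI)
qed

lemma shifted_harm_power_bigo_sqrt:
  "(\<lambda>k. shifted_harm (real (Suc k) + y) ^ p) \<in> O(\<lambda>k. sqrt (real k))"
proof -
  have "(\<lambda>k. shifted_harm (real k + (1 + y)) ^ p) \<in> O(\<lambda>k. ln (real k) ^ p)"
    by (intro landau_o.big_power shifted_harm_bigo_ln)
  also note ln_power_bigo_sqrt
  finally show ?thesis by (simp add: add_ac)
qed

lemma summable_bigo_sqrt_times_shift_weight: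
  assumes "f \<in> O(\<lambda>k. sqrt (real k))"
  shows "summable (\<lambda>k. f k * (1 / real (Suc k) - 1 / (real (Suc k) + y)))"
proof (rule summable_comparison_test_bigo)
  show "summable (\<lambda>k. norm (real k powr (-3/2)))"
    using summable_real_powr_iff[of "-3/2"] by simp
  have "(\<lambda>k. 1 / real (Suc k) - 1 / (real (Suc k) + y)) \<in> O(\<lambda>k. 1 / real k ^ 2)"
    by real_asymp
  with assms have "(\<lambda>k. f k * (1 / real (Suc k) - 1 / (real (Suc k) + y)))
      \<in> O(\<lambda>k. sqrt (real k) * (1 / real k ^ 2))"
    by (rule landau_o.big.mult)
  also have "(\<lambda>k. sqrt (real k) * (1 / real k ^ 2)) \<in> O(\<lambda>k. real k powr (-3/2))"
    by real_asymp
  finally show "(\<lambda>k. f k * (1 / real (Suc k) - 1 / (real (Suc k) + y)))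
      \<in> O(\<lambda>k. real k powr (-3/2))" .
qed

lemma tendsto_bigo_sqrt_over_shift:
  assumes "f \<in> O(\<lambda>k. sqrt (real k))"
  shows "(\<lambda>k. f k / (real (Suc k) + y)) \<longlonglongrightarrow> 0"
proof (rule smalloD_tendsto)
  have "(\<lambda>k. sqrt (real k)) \<in> o(\<lambda>k. real (Suc k) + y)" by real_asymp
  with assms show "f \<in> o(\<lambda>k. real (Suc k) + y)" by (rule landau_o.big_small_trans)
qed

definition harm_power_series :: "nat \<Rightarrow> real \<Rightarrow> real" where
  "harm_power_series p y =
     (\<Sum>k. shifted_harm (real (Suc k) + y) ^ p * (1 / real (Suc k) - 1 / (real (Suc k) + y)))"

lemma sums_harm_power_series:
  "(\<lambda>k. shifted_harm (real (Suc k) + y) ^ p * (1 / real (Suc k) - 1 / (real (Suc k) + y)))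
     sums harm_power_series p y"
  unfolding harm_power_series_def
  by (intro summable_sums summable_bigo_sqrt_times_shift_weight shifted_harm_power_bigo_sqrt)

lemma tendsto_shifted_harm_power_over_shift:
  "(\<lambda>k. shifted_harm (real (Suc k) + y) ^ p / (real (Suc k) + y)) \<longlonglongrightarrow> 0"
  by (intro tendsto_bigo_sqrt_over_shift shifted_harm_power_bigo_sqrt)

lemma harm_power_series_1_plus1:
  assumes "-1 < y"
  shows "harm_power_series 1 (y + 1) = harm_power_series 1 y + 2 * shifted_harm (y + 1) / (y + 1)"
proof -
  define g where "g k = shifted_harm (real (Suc k) + y) / (real (Suc k) + y)" for k
  have "(\<lambda>k. (1 / real (Suc k) - 1 / (real (Suc k) + (y + 1))) / (y + 1) + (g k - g (Suc k)))
      sums (shifted_harm (y + 1) / (y + 1) + (g 0 - 0))"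
    using assms unfolding g_def
    by (intro sums_add sums_divide sums_shifted_harm telescope_sums')
       (auto intro: tendsto_shifted_harm_power_over_shift[where p = 1, simplified])
  moreover have "(1 / real (Suc k) - 1 / (real (Suc k) + (y + 1))) / (y + 1) + (g k - g (Suc k))
      = shifted_harm (real (Suc k) + (y + 1)) * (1 / real (Suc k) - 1 / (real (Suc k) + (y + 1)))
        - shifted_harm (real (Suc k) + y) * (1 / real (Suc k) - 1 / (real (Suc k) + y))" for k
  proof -
    define a where "a = real (Suc k)"
    define h where "h = shifted_harm (a + y)"
    have a: "0 < a" "0 < a + y" using assms by (simp_all add: a_def)
    have h1: "shifted_harm (a + (y + 1)) = h + 1 / (a + y + 1)"
      using shifted_harm_plus1[of "a + y"] a by (simp add: h_def add_ac)
    have g: "g k = h / (a + y)" "g (Suc k) = shifted_harm (a + (y + 1)) / (a + y + 1)"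
      by (simp_all add: g_def h_def a_def add_ac)
    have "a \<noteq> 0" "a + y \<noteq> 0" "1 + (a + y) \<noteq> 0" "1 + y \<noteq> 0" using a assms by linarith+
    then show ?thesis
      unfolding a_def[symmetric] h_def[symmetric] g h1 by (simp add: divide_simps add_ac) algebra
  qed
  moreover have "(\<lambda>k. shifted_harm (real (Suc k) + (y + 1)) * (1 / real (Suc k) - 1 / (real (Suc k) + (y + 1)))
        - shifted_harm (real (Suc k) + y) * (1 / real (Suc k) - 1 / (real (Suc k) + y)))
      sums (harm_power_series 1 (y + 1) - harm_power_series 1 y)"
    using sums_diff[OF sums_harm_power_series[of "y + 1" 1] sums_harm_power_series[of y 1]] by simp
  moreover have "g 0 = shifted_harm (y + 1) / (y + 1)" by (simp add: g_def add_ac)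
  ultimately show ?thesis using sums_unique2 by fastforce
qed

lemma eq_if_mono_same_increments:
  fixes f g :: "real \<Rightarrow> real"
  assumes mono: "mono_on {0..} f" "mono_on {0..} g"
    and incr: "\<And>y. 0 \<le> y \<Longrightarrow> f (y + 1) - f y = g (y + 1) - g y"
    and "f 0 = g 0"
    and lim: "(\<lambda>n. g (real n + 1) - g (real n)) \<longlonglongrightarrow> 0"
    and "0 \<le> y"
  shows "f y = g y"
proof -
  have periodic: "f (y + real n) - g (y + real n) = f y - g y" if "0 \<le> y" for y n
  proof (induction n)
    case (Suc n)
    have "f (y + real n + 1) - f (y + real n) = g (y + real n + 1) - g (y + real n)"
      using that by (intro incr) simp
    moreover have "y + real (Suc n) = y + real n + 1" by simp
    ultimately show ?case using Suc.IH by (simp add: add_ac)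
  qed simp
  have at_nat: "f (real n) = g (real n)" for n
    using periodic[of 0 n] \<open>f 0 = g 0\<close> by simp
  define m where "m = nat \<lfloor>y\<rfloor>"
  have m: "real m \<le> y" "y \<le> real m + 1" unfolding m_def using \<open>0 \<le> y\<close> by linarith+
  have "\<bar>f y - g y\<bar> \<le> g (real (m + n) + 1) - g (real (m + n))" for n
  proof -
    let ?M = "real (m + n)" and ?z = "y + real n"
    have "f ?M \<le> f ?z" "f ?z \<le> f (?M + 1)" "g ?M \<le> g ?z" "g ?z \<le> g (?M + 1)"
      using m \<open>0 \<le> y\<close> by (auto intro!: mono_onD[OF mono(1)] mono_onD[OF mono(2)])
    moreover have "f (?M + 1) = g (?M + 1)" using at_nat[of "Suc (m + n)"] by (simp add: add_ac)
    ultimately show ?thesis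
      using periodic[OF \<open>0 \<le> y\<close>, of n] at_nat[of "m + n"] by linarith
  qed
  moreover have "(\<lambda>n. g (real (m + n) + 1) - g (real (m + n))) \<longlonglongrightarrow> 0"
    using LIMSEQ_ignore_initial_segment[OF lim, of m] by (simp add: add.commute)
  ultimately have "\<bar>f y - g y\<bar> \<le> 0"
    by (intro LIMSEQ_le_const[of _ 0]) auto
  thus ?thesis by simp
qed

lemma harm_power_series_1_mono:
  assumes "0 \<le> x" "x \<le> y"
  shows "harm_power_series 1 x \<le> harm_power_series 1 y"
  unfolding harm_power_series_def
proof (rule suminf_le)
  show "summable (\<lambda>k. shifted_harm (real (Suc k) + x) ^ 1 * (1 / real (Suc k) - 1 / (real (Suc k) + x)))"
    using sums_harm_power_series by (rule sums_summable)
  show "summable (\<lambda>k. shifted_harm (real (Suc k) + y) ^ 1 * (1 / real (Suc k) - 1 / (real (Suc k) + y)))"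
    using sums_harm_power_series by (rule sums_summable)
  show "shifted_harm (real (Suc k) + x) ^ 1 * (1 / real (Suc k) - 1 / (real (Suc k) + x))
      \<le> shifted_harm (real (Suc k) + y) ^ 1 * (1 / real (Suc k) - 1 / (real (Suc k) + y))" for k
    using assms by (auto intro!: mult_mono shifted_harm_mono shifted_harm_nonneg frac_le)
qed

lemma harm_power_series_1_eq:
  assumes "0 \<le> y"
  shows "harm_power_series 1 y = shifted_harm y ^ 2 + shifted_harm_gen 2 y"
proof (rule eq_if_mono_same_increments[OF _ _ _ _ _ assms])
  show "mono_on {0..} (harm_power_series 1)"
    by (intro mono_onI harm_power_series_1_mono) auto
  show "mono_on {0..} (\<lambda>y. shifted_harm y ^ 2 + shifted_harm_gen 2 y)"
    by (auto intro!: mono_onI add_mono power_mono shifted_harm_mono shifted_harm_nonneg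
             shifted_harm_gen_2_mono)
  have increment: "shifted_harm (y + 1) ^ 2 + shifted_harm_gen 2 (y + 1) - (shifted_harm y ^ 2 + shifted_harm_gen 2 y)
      = 2 * shifted_harm (y + 1) / (y + 1)" if "0 \<le> y" for y
  proof -
    have "y \<noteq> -1" "-1 < y" "y + 1 \<noteq> 0" using that by linarith+
    then show ?thesis
      unfolding shifted_harm_plus1[OF \<open>y \<noteq> -1\<close>] shifted_harm_gen_2_plus1[OF \<open>-1 < y\<close>]
      by (simp add: divide_simps power2_eq_square) algebra
  qed
  show "harm_power_series 1 (y + 1) - harm_power_series 1 y
      = shifted_harm (y + 1) ^ 2 + shifted_harm_gen 2 (y + 1) - (shifted_harm y ^ 2 + shifted_harm_gen 2 y)"
    if "0 \<le> y" for y
    using harm_power_series_1_plus1[of y] increment[OF that] that by simp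
  show "harm_power_series 1 0 = shifted_harm 0 ^ 2 + shifted_harm_gen 2 0"
    using shifted_harm_of_nat[of 0] by (simp add: harm_power_series_def shifted_harm_gen_def harm_def)
  show "(\<lambda>n. shifted_harm (real n + 1) ^ 2 + shifted_harm_gen 2 (real n + 1)
      - (shifted_harm (real n) ^ 2 + shifted_harm_gen 2 (real n))) \<longlonglongrightarrow> 0"
    unfolding increment[OF of_nat_0_le_iff]
    using tendsto_mult[OF tendsto_const tendsto_shifted_harm_power_over_shift[of 0 1], of 2]
    by (simp add: add_ac)
qed

definition harm_cubic :: "real \<Rightarrow> real" where
  "harm_cubic t = shifted_harm t ^ 3 + shifted_harm t * shifted_harm_gen 2 t + shifted_harm t * zeta_nat 2"

lemma harm_power_series_2_plus1:
  assumes "-1 < x"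
  shows "harm_power_series 2 (x + 1)
    = harm_power_series 2 x + harm_cubic (x + 1) - harm_cubic x + shifted_harm (x + 1) / (x + 1)^2"
proof -
  define y where "y = x + 1"
  have y: "0 < y" "y \<noteq> -1" using assms by (simp_all add: y_def)
  define g where "g k = shifted_harm (real (Suc k) + x)^2 / (real (Suc k) + x)" for k
  have "(\<lambda>k. 2 * (shifted_harm (real (Suc k) + y) ^ 1 * (1 / real (Suc k) - 1 / (real (Suc k) + y))) / y
      - ((1 / real (Suc k) - 1 / (real (Suc k) + y)) / y - 1 / (real (Suc k) + y)^2) / y + (g k - g (Suc k)))
      sums (2 * harm_power_series 1 y / y - (shifted_harm y / y - Polygamma 1 (y + 1)) / y + (g 0 - 0))"
    unfolding g_def using y
    by (intro sums_add sums_diff sums_divide sums_mult sums_harm_power_series sums_shifted_harm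
        sums_inverse_square_shift telescope_sums' tendsto_shifted_harm_power_over_shift)
  moreover have "2 * (shifted_harm (real (Suc k) + y) ^ 1 * (1 / real (Suc k) - 1 / (real (Suc k) + y))) / y
      - ((1 / real (Suc k) - 1 / (real (Suc k) + y)) / y - 1 / (real (Suc k) + y)^2) / y + (g k - g (Suc k))
      = shifted_harm (real (Suc k) + y)^2 * (1 / real (Suc k) - 1 / (real (Suc k) + y))
        - shifted_harm (real (Suc k) + x)^2 * (1 / real (Suc k) - 1 / (real (Suc k) + x))" for k
  proof -
    define a where "a = real (Suc k)"
    define h where "h = shifted_harm (a + x)"
    have a: "0 < a" "0 < a + x" using assms by (simp_all add: a_def)
    have h1: "shifted_harm (a + y) = h + 1 / (a + x + 1)"
      using shifted_harm_plus1[of "a + x"] a by (simp add: h_def y_def add_ac)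
    have g: "g k = h^2 / (a + x)" "g (Suc k) = shifted_harm (a + y)^2 / (a + x + 1)"
      by (simp_all add: g_def h_def a_def y_def add_ac)
    have "a \<noteq> 0" "a + x \<noteq> 0" "1 + (a + x) \<noteq> 0" "1 + x \<noteq> 0" using a assms by linarith+
    then show ?thesis
      unfolding a_def[symmetric] h_def[symmetric] g h1 unfolding y_def
      by (simp add: divide_simps add_ac) algebra
  qed
  moreover have "(\<lambda>k. shifted_harm (real (Suc k) + y)^2 * (1 / real (Suc k) - 1 / (real (Suc k) + y))
        - shifted_harm (real (Suc k) + x)^2 * (1 / real (Suc k) - 1 / (real (Suc k) + x)))
      sums (harm_power_series 2 y - harm_power_series 2 x)"
    using sums_diff[OF sums_harm_power_series[of y 2] sums_harm_power_series[of x 2]] .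
  ultimately have "harm_power_series 2 y - harm_power_series 2 x
      = 2 * harm_power_series 1 y / y - (shifted_harm y / y - Polygamma 1 (y + 1)) / y + g 0"
    using sums_unique2 by fastforce
  moreover have "harm_power_series 1 y = shifted_harm y ^ 2 + shifted_harm_gen 2 y"
    using y by (intro harm_power_series_1_eq) simp
  moreover have "Polygamma 1 (y + 1) = zeta_nat 2 - shifted_harm_gen 2 y"
    using shifted_harm_gen_2_eq[OF y(2)] by simp
  moreover have "g 0 = shifted_harm y ^ 2 / y" by (simp add: g_def y_def add_ac)
  moreover have "shifted_harm x = shifted_harm y - 1 / y"
    using shifted_harm_plus1[of x] assms by (simp add: y_def)
  moreover have "shifted_harm_gen 2 x = shifted_harm_gen 2 y - 1 / y^2"
    using shifted_harm_gen_2_plus1[OF assms] by (simp add: y_def)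
  ultimately show ?thesis
    unfolding harm_cubic_def y_def[symmetric] using y by (simp add: divide_simps) algebra
qed

lemma harm_power_series_2_add_nat:
  assumes "-1 < x"
  shows "harm_power_series 2 (x + real d) = harm_power_series 2 x + harm_cubic (x + real d) - harm_cubic x
           + (\<Sum>j=1..d. shifted_harm (x + real j) / (x + real j)^2)"
proof (induction d)
  case (Suc d)
  have "x + real (Suc d) = (x + real d) + 1" by simp
  with harm_power_series_2_plus1[of "x + real d"] Suc.IH assms show ?case by (simp add: add_ac)
qed simp

lemma sums_harm_square_partial_fraction:
  assumes "-1 < \<alpha> - real m"
  shows "(\<lambda>n. shifted_harm (real (Suc n) + \<alpha>)^2
              * (1 / (real (Suc n) + real m) - 1 / (real (Suc n) + \<alpha>)))
    sums (harm_power_series 2 (\<alpha> - real m) - (\<alpha> - real m)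
          * (\<Sum>j=1..m. shifted_harm (\<alpha> + real j - real m)^2 / (real j * (\<alpha> + real j - real m))))"
proof -
  define u where "u k = shifted_harm (real (Suc k) + (\<alpha> - real m))^2
    * (1 / real (Suc k) - 1 / (real (Suc k) + (\<alpha> - real m)))" for k
  have "u sums harm_power_series 2 (\<alpha> - real m)"
    unfolding u_def by (rule sums_harm_power_series)
  then have "(\<lambda>n. u (n + m)) sums (harm_power_series 2 (\<alpha> - real m) - (\<Sum>k<m. u k))"
    by (simp add: sums_iff_shift)
  moreover have "u (n + m) = shifted_harm (real (Suc n) + \<alpha>)^2
      * (1 / (real (Suc n) + real m) - 1 / (real (Suc n) + \<alpha>))" for n
    by (simp add: u_def algebra_simps)
  moreover have "u k = (\<alpha> - real m) * (shifted_harm (\<alpha> + real (Suc k) - real m)^2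
      / (real (Suc k) * (\<alpha> + real (Suc k) - real m)))" for k
  proof -
    have "0 < real (Suc k) + (\<alpha> - real m)" using assms by simp
    then show ?thesis unfolding u_def by (simp add: field_simps)
  qed
  then have "(\<Sum>k<m. u k) = (\<alpha> - real m)
      * (\<Sum>j=1..m. shifted_harm (\<alpha> + real j - real m)^2 / (real j * (\<alpha> + real j - real m)))"
    by (simp add: sum_distrib_left sum.atLeast1_atMost_eq)
  ultimately show ?thesis by simp
qed

lemma partial_fraction_shift_weights:
  fixes a r k \<alpha> c :: real
  assumes "0 < a + r" "r < k" "k < \<alpha>"
  shows "c / ((a + r) * (a + k))
    = (c * (1 / (a + r) - 1 / (a + \<alpha>)) - c * (1 / (a + k) - 1 / (a + \<alpha>))) / (k - r)"
  using assms by (simp add: divide_simps) (simp add: algebra_simps)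

theorem corollary2p8:
  fixes r k :: nat and \<alpha> :: real
  assumes "r < k" and "real k < \<alpha>"
  shows "(\<Sum>n. (shifted_harm (real (Suc n) + \<alpha>))\<^sup>2 / ((real (Suc n) + real r) * (real (Suc n) + real k)))
    = 1 / (real k - real r) *
      ( (shifted_harm (\<alpha> - r)) ^ 3 + shifted_harm (\<alpha> - r) * shifted_harm_gen 2 (\<alpha> - r)
        + shifted_harm (\<alpha> - r) * zeta_nat 2
        - (shifted_harm (\<alpha> - k)) ^ 3 - shifted_harm (\<alpha> - k) * shifted_harm_gen 2 (\<alpha> - k)
        - shifted_harm (\<alpha> - k) * zeta_nat 2
        + (real r - \<alpha>) * (\<Sum>j=1..r. (shifted_harm (\<alpha> + j - r))\<^sup>2 / (real j * (\<alpha> + j - r)))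
        + (\<Sum>j=1..k - r. shifted_harm (\<alpha> + j - k) / (\<alpha> + j - k)\<^sup>2)
        - (real k - \<alpha>) * (\<Sum>j=1..k. (shifted_harm (\<alpha> + j - k))\<^sup>2 / (real j * (\<alpha> + j - k))) )"
proof -
  define S where "S m = (\<Sum>j=1..m. shifted_harm (\<alpha> + real j - real m)^2 / (real j * (\<alpha> + real j - real m)))"
    for m
  have "(\<lambda>n. (shifted_harm (real (Suc n) + \<alpha>))\<^sup>2 / ((real (Suc n) + real r) * (real (Suc n) + real k)))
      sums ((harm_power_series 2 (\<alpha> - real r) - (\<alpha> - real r) * S r
             - (harm_power_series 2 (\<alpha> - real k) - (\<alpha> - real k) * S k)) / (real k - real r))"
    unfolding S_def using assms
    by (subst partial_fraction_shift_weights[of _ r k \<alpha>])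
       (intro sums_divide sums_diff sums_harm_square_partial_fraction | simp)+
  moreover have "harm_power_series 2 (\<alpha> - real r) = harm_power_series 2 (\<alpha> - real k)
      + harm_cubic (\<alpha> - real r) - harm_cubic (\<alpha> - real k)
      + (\<Sum>j=1..k - r. shifted_harm (\<alpha> + real j - real k) / (\<alpha> + real j - real k)^2)"
    using harm_power_series_2_add_nat[of "\<alpha> - real k" "k - r"] assms
    by (simp add: of_nat_diff algebra_simps)
  ultimately show ?thesis
    unfolding S_def harm_cubic_def using assms by (simp add: sums_iff field_simps)
qed

end
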